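(* Let $n,m\ge1$ and let $S=\{a_1,\dots,a_n,b_1,\dots,b_m\}$ be the poset whose only strict relations are $a_i<b_j$ for all $i=1,\dots,n$, $j=1,\dots,m$. Then every stochastically monotone generator on $S$ is realizably monotone. *)

theory Defs
  imports Complex_Main
begin

definition is_generator :: "('a::finite \<Rightarrow> 'a \<Rightarrow> real) \<Rightarrow> bool" where
  "is_generator Q \<longleftrightarrow> (\<forall>x y. x \<noteq> y \<longrightarrow> 0 \<le> Q x y) \<and> (\<forall>x. (\<Sum>y\<in>UNIV. Q x y) = 0)"

definition up_set :: "('a \<Rightarrow> 'a \<Rightarrow> bool) \<Rightarrow> 'a set \<Rightarrow> bool" where
  "up_set le U \<longleftrightarrow> (\<forall>x y. x \<in> U \<longrightarrow> le x y \<longrightarrow> y \<in> U)"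

definition monotone_map :: "('a \<Rightarrow> 'a \<Rightarrow> bool) \<Rightarrow> ('a \<Rightarrow> 'a) \<Rightarrow> bool" where
  "monotone_map le f \<longleftrightarrow> (\<forall>x y. le x y \<longrightarrow> le (f x) (f y))"

text \<open>Stochastic monotonicity of a generator (Massey's criterion): for all x \<le> y
and every up-set U containing both or neither of x, y, Q(x,U) \<le> Q(y,U).\<close>

definition stoch_monotone_generator ::
  "('a::finite \<Rightarrow> 'a \<Rightarrow> bool) \<Rightarrow> ('a \<Rightarrow> 'a \<Rightarrow> real) \<Rightarrow> bool" where
  "stoch_monotone_generator le Q \<longleftrightarrow> is_generator Q \<and>
     (\<forall>x y U. le x y \<longrightarrow> up_set le U \<longrightarrow> (x \<in> U \<longleftrightarrow> y \<in> U) \<longrightarrow>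
        (\<Sum>z\<in>U. Q x z) \<le> (\<Sum>z\<in>U. Q y z))"

definition realizably_monotone_generator ::
  "('a::finite \<Rightarrow> 'a \<Rightarrow> bool) \<Rightarrow> ('a \<Rightarrow> 'a \<Rightarrow> real) \<Rightarrow> bool" where
  "realizably_monotone_generator le Q \<longleftrightarrow> is_generator Q \<and>
     (\<exists>rate :: ('a \<Rightarrow> 'a) \<Rightarrow> real. (\<forall>f. 0 \<le> rate f) \<and>
        (\<forall>x y. x \<noteq> y \<longrightarrow>
           Q x y = (\<Sum>f\<in>{f. monotone_map le f \<and> f x = y}. rate f)))"

text \<open>The bipartite poset a_1..a_n (Inl) below b_1..b_m (Inr): only strict
relations are a_i < b_j.\<close>

fun bip_le :: "('a + 'b) \<Rightarrow> ('a + 'b) \<Rightarrow> bool" where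
  "bip_le (Inl i) (Inl i') \<longleftrightarrow> i = i'"
| "bip_le (Inr j) (Inr j') \<longleftrightarrow> j = j'"
| "bip_le (Inl i) (Inr j) \<longleftrightarrow> True"
| "bip_le (Inr j) (Inl i) \<longleftrightarrow> False"

end

theory Submission
  imports Defs
begin

text \<open>Split the off-diagonal part of Q into its columns x \<mapsto> Q x z, one for every target z.
A column is a nonnegative combination of the maps that send a set A to z and fix everything
else, A running through the superlevel sets {x. t < Q x z} (layer cake decomposition).
Such a map is monotone as soon as the column is monotone along the pairs a_i < b_j whose
order is not already respected by jumping to z. For a top element z = b_k this is Massey's
inequality for the up-set {b_k}; for a bottom element z = a_k it is Massey's inequality for
the up-set S - {a_k} combined with the zero row sums.\<close>

definition monotone_representable ::
  "('s \<Rightarrow> 's \<Rightarrow> bool) \<Rightarrow> ('s::finite \<Rightarrow> 's \<Rightarrow> real) \<Rightarrow> bool" where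
  "monotone_representable le R \<longleftrightarrow>
     (\<exists>rate :: ('s \<Rightarrow> 's) \<Rightarrow> real. (\<forall>f. 0 \<le> rate f) \<and>
        (\<forall>x y. x \<noteq> y \<longrightarrow> R x y = (\<Sum>f\<in>{f. monotone_map le f \<and> f x = y}. rate f)))"

lemma realizably_monotone_generator_iff:
  "realizably_monotone_generator le Q \<longleftrightarrow> is_generator Q \<and> monotone_representable le Q"
  unfolding realizably_monotone_generator_def monotone_representable_def ..

lemma monotone_representable_zero: "monotone_representable le (\<lambda>x y. 0)"
  unfolding monotone_representable_def by (rule exI[of _ "\<lambda>f. 0"]) simp

lemma monotone_representable_add:
  assumes "monotone_representable le R1" "monotone_representable le R2"
  shows "monotone_representable le (\<lambda>x y. R1 x y + R2 x y)"
proof -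
  obtain r1 where "\<forall>f. 0 \<le> r1 f"
    "\<forall>x y. x \<noteq> y \<longrightarrow> R1 x y = (\<Sum>f\<in>{f. monotone_map le f \<and> f x = y}. r1 f)"
    using assms(1) unfolding monotone_representable_def by blast
  moreover obtain r2 where "\<forall>f. 0 \<le> r2 f"
    "\<forall>x y. x \<noteq> y \<longrightarrow> R2 x y = (\<Sum>f\<in>{f. monotone_map le f \<and> f x = y}. r2 f)"
    using assms(2) unfolding monotone_representable_def by blast
  ultimately show ?thesis
    unfolding monotone_representable_def
    by (intro exI[of _ "\<lambda>f. r1 f + r2 f"]) (simp add: sum.distrib)
qed

lemma monotone_representable_sum:
  assumes "\<And>i. i \<in> I \<Longrightarrow> monotone_representable le (R i)"
  shows "monotone_representable le (\<lambda>x y. \<Sum>i\<in>I. R i x y)"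
  using assms
proof (induction I rule: infinite_finite_induct)
  case (insert i I)
  then show ?case by (simp add: monotone_representable_add)
qed (simp_all add: monotone_representable_zero)

lemma monotone_representable_cong:
  assumes "monotone_representable le R" "\<And>x y. x \<noteq> y \<Longrightarrow> R x y = R' x y"
  shows "monotone_representable le R'"
  using assms unfolding monotone_representable_def by metis

lemma monotone_representable_scaled_map:
  assumes "monotone_map le g" "0 \<le> c"
  shows "monotone_representable le (\<lambda>x y. if g x = y then c else 0)"
  unfolding monotone_representable_def
  by (rule exI[of _ "\<lambda>f. if f = g then c else 0"]) (use assms in \<open>simp add: sum.delta\<close>)

definition jump_to :: "'s \<Rightarrow> 's set \<Rightarrow> 's \<Rightarrow> 's" where
  "jump_to z A x = (if x \<in> A then z else x)"

lemma monotone_map_jump_to: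
  assumes "le z z"
    and "\<And>x y. le x y \<Longrightarrow> x \<in> A \<Longrightarrow> y \<notin> A \<Longrightarrow> le z y"
    and "\<And>x y. le x y \<Longrightarrow> x \<notin> A \<Longrightarrow> y \<in> A \<Longrightarrow> le x z"
  shows "monotone_map le (jump_to z A)"
  using assms unfolding monotone_map_def jump_to_def by auto

lemma monotone_representable_column:
  fixes w :: "'s::finite \<Rightarrow> real"
  assumes "le z z"
    and "\<And>x. x \<noteq> z \<Longrightarrow> 0 \<le> w x"
    and "\<And>x y. le x y \<Longrightarrow> x \<noteq> y \<Longrightarrow> x \<noteq> z \<Longrightarrow> y \<noteq> z \<Longrightarrow> \<not> le z y \<Longrightarrow> w x \<le> w y"
    and "\<And>x y. le x y \<Longrightarrow> x \<noteq> y \<Longrightarrow> x \<noteq> z \<Longrightarrow> y \<noteq> z \<Longrightarrow> \<not> le x z \<Longrightarrow> w y \<le> w x"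
  shows "monotone_representable le (\<lambda>x y. if y = z then w x else 0)"
  using assms(2-)
proof (induction "card {x. x \<noteq> z \<and> 0 < w x}" arbitrary: w rule: less_induct)
  case less
  define A where "A = {x. x \<noteq> z \<and> 0 < w x}"
  show ?case
  proof (cases "A = {}")
    case True
    with less.prems(1) have w_zero: "\<And>x. x \<noteq> z \<Longrightarrow> w x = 0"
      unfolding A_def by force
    show ?thesis
      by (rule monotone_representable_cong[OF monotone_representable_zero]) (use w_zero in auto)
  next
    case False
    define m where "m = Min (w ` A)"
    have m_le: "\<And>x. x \<in> A \<Longrightarrow> m \<le> w x"
      unfolding m_def by simp
    have "m \<in> w ` A"
      unfolding m_def using False by (intro Min_in) auto
    then obtain x0 where x0: "x0 \<in> A" "w x0 = m"
      by blast
    define w' where "w' x = (if x \<in> A then w x - m else w x)" for x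
    have w'_nonneg: "\<And>x. x \<noteq> z \<Longrightarrow> 0 \<le> w' x"
      using less.prems(1) m_le unfolding w'_def by fastforce
    have w'_mono: "w' x \<le> w' y" if "w x \<le> w y" "x \<noteq> z" "y \<noteq> z" for x y
      using that less.prems(1)[of x] m_le[of y] unfolding w'_def A_def by auto
    have "{x. x \<noteq> z \<and> 0 < w' x} \<subset> A"
      using x0 unfolding w'_def A_def by auto
    then have "card {x. x \<noteq> z \<and> 0 < w' x} < card {x. x \<noteq> z \<and> 0 < w x}"
      unfolding A_def by (simp add: psubset_card_mono)
    then have peeled: "monotone_representable le (\<lambda>x y. if y = z then w' x else 0)"
      by (rule less.hyps) (use w'_nonneg w'_mono less.prems in blast)+
    have "monotone_map le (jump_to z A)"
    proof (rule monotone_map_jump_to)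
      show "le z z" by fact
    next
      fix x y assume "le x y" "x \<in> A" "y \<notin> A"
      then show "le z y"
        using less.prems(1)[of y] less.prems(2)[of x y] \<open>le z z\<close> unfolding A_def by force
    next
      fix x y assume "le x y" "x \<notin> A" "y \<in> A"
      then show "le x z"
        using less.prems(1)[of x] less.prems(3)[of x y] \<open>le z z\<close> unfolding A_def by force
    qed
    moreover have "0 \<le> m"
      using x0 unfolding A_def by simp
    ultimately have jump: "monotone_representable le (\<lambda>x y. if jump_to z A x = y then m else 0)"
      by (rule monotone_representable_scaled_map)
    show ?thesis
      by (rule monotone_representable_cong[OF monotone_representable_add[OF peeled jump]])
        (auto simp: w'_def jump_to_def A_def)
  qed
qed

lemma stoch_monotone_rate_to_maximal:
  assumes "stoch_monotone_generator le Q" "le x y" "x \<noteq> z" "y \<noteq> z"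
    and "\<And>u. le z u \<Longrightarrow> u = z"
  shows "Q x z \<le> Q y z"
proof -
  have "up_set le {z}"
    using assms(5) unfolding up_set_def by blast
  with assms(1-4) show ?thesis
    unfolding stoch_monotone_generator_def by fastforce
qed

lemma stoch_monotone_rate_to_minimal:
  assumes "stoch_monotone_generator le Q" "le x y" "x \<noteq> z" "y \<noteq> z"
    and "\<And>u. le u z \<Longrightarrow> u = z"
  shows "Q y z \<le> Q x z"
proof -
  have "up_set le (- {z})"
    using assms(5) unfolding up_set_def by blast
  with assms(1-4) have "(\<Sum>u\<in>- {z}. Q x u) \<le> (\<Sum>u\<in>- {z}. Q y u)"
    unfolding stoch_monotone_generator_def by fastforce
  moreover have "(\<Sum>u\<in>- {z}. Q v u) = - Q v z" for v
  proof -
    have "(\<Sum>u\<in>UNIV. Q v u) = 0"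
      using assms(1) unfolding stoch_monotone_generator_def is_generator_def by blast
    moreover have "(\<Sum>u\<in>UNIV. Q v u) = Q v z + (\<Sum>u\<in>- {z}. Q v u)"
      by (simp add: Compl_eq_Diff_UNIV sum.remove)
    ultimately show ?thesis by linarith
  qed
  ultimately show ?thesis by simp
qed

lemma bip_le_refl [simp]: "bip_le x x"
  by (cases x) auto

lemma bip_le_strict: "bip_le x y \<Longrightarrow> x \<noteq> y \<Longrightarrow> \<exists>a b. x = Inl a \<and> y = Inr b"
  by (cases x; cases y) auto

lemma bip_column_monotone_representable:
  fixes Q :: "('a::finite + 'b::finite) \<Rightarrow> ('a + 'b) \<Rightarrow> real"
  assumes sm: "stoch_monotone_generator bip_le Q"
  shows "monotone_representable bip_le (\<lambda>x y. if y = z then Q x z else 0)"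
proof (rule monotone_representable_column)
  show "\<And>x. x \<noteq> z \<Longrightarrow> 0 \<le> Q x z"
    using sm unfolding stoch_monotone_generator_def is_generator_def by blast
next
  fix x y assume xy: "bip_le x y" "x \<noteq> y" "x \<noteq> z" "y \<noteq> z" "\<not> bip_le z y"
  then obtain b where "z = Inr b"
    using bip_le_strict by (cases z) fastforce+
  then have "\<And>u. bip_le z u \<Longrightarrow> u = z"
    by (auto elim: bip_le.elims)
  with sm xy(1,3,4) show "Q x z \<le> Q y z"
    by (rule stoch_monotone_rate_to_maximal)
next
  fix x y assume xy: "bip_le x y" "x \<noteq> y" "x \<noteq> z" "y \<noteq> z" "\<not> bip_le x z"
  then obtain a where "z = Inl a"
    using bip_le_strict by (cases z) fastforce+
  then have "\<And>u. bip_le u z \<Longrightarrow> u = z"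
    by (auto elim: bip_le.elims)
  with sm xy(1,3,4) show "Q y z \<le> Q x z"
    by (rule stoch_monotone_rate_to_minimal)
qed simp

theorem mainTheorem12:
  fixes Q :: "('a::finite + 'b::finite) \<Rightarrow> ('a + 'b) \<Rightarrow> real"
  assumes "stoch_monotone_generator bip_le Q"
  shows "realizably_monotone_generator bip_le Q"
proof -
  have "monotone_representable bip_le (\<lambda>x y. \<Sum>z\<in>UNIV. if y = z then Q x z else 0)"
    using bip_column_monotone_representable[OF assms] by (rule monotone_representable_sum)
  then have "monotone_representable bip_le Q"
    by (rule monotone_representable_cong) simp
  moreover have "is_generator Q"
    using assms unfolding stoch_monotone_generator_def by blast
  ultimately show ?thesis
    by (simp add: realizably_monotone_generator_iff)
qed

end
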